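(* Let $k\ge2$, $1\le\nu\le k-1$, $d\ge2$, $\delta\in\mathbb{C}^*$, and let \[ S(z_1,\dots,z_k)=\big(z_2,\dots,z_k,\ \delta(z_{k-\nu+1}^d-z_1)\big) \] be the shift-like automorphism of $\mathbb{C}^k$ of type $\nu$ and degree $d$, with positive Green's function \[ G^+(z)=\lim_{n\to\infty}\frac1{d^n}\log^+\|S^{\nu n}(z)\|. \] For $R>0$ and $1\le i\le k$ let $V_i=\{z\in\mathbb{C}^k:\|z\|_\infty=|z_i|\ge R\}$, $V_R=\overline{\Delta^k(0;R)}$, $V_R^+=\bigcup_{i=k-\nu+1}^kV_i$ and $V_R^-=\bigcup_{i=1}^{k-\nu}V_i$. Then for every $c>0$ there exists $R>0$ such that $G^+(z)\ge c$ for every $z\in V_R^+$; i.e. $\{z\in\mathbb{C}^k:G^+(z)<c\}\subset V_R\cup V_R^-$.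
   Context: $\|z\|_\infty=\max_i|z_i|$, $\log^+t=\max(\log t,0)$, $S^m$ is the $m$-th iterate of $S$, and $\Delta^k(0;R)$ is the polydisc of polyradius $(R,\dots,R)$ centered at $0$. *)

theory Defs
  imports "HOL-Analysis.Analysis"
begin

text \<open>Points of C^k are represented as functions nat => complex with coordinates
  indexed by 1..k and vanishing outside this range.\<close>

definition cvec :: "nat \<Rightarrow> (nat \<Rightarrow> complex) set" where
  "cvec k = {z. \<forall>i. i \<notin> {1..k} \<longrightarrow> z i = 0}"

definition supnorm :: "nat \<Rightarrow> (nat \<Rightarrow> complex) \<Rightarrow> real" where
  "supnorm k z = Max ((\<lambda>i. cmod (z i)) ` {1..k})"

definition logplus :: "real \<Rightarrow> real" where
  "logplus t = max (ln t) 0"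

definition shift_like :: "nat \<Rightarrow> nat \<Rightarrow> nat \<Rightarrow> complex \<Rightarrow> (nat \<Rightarrow> complex) \<Rightarrow> (nat \<Rightarrow> complex)" where
  "shift_like k \<nu> d \<delta> z = (\<lambda>i. if 1 \<le> i \<and> i < k then z (i + 1)
                              else if i = k then \<delta> * (z (k - \<nu> + 1) ^ d - z 1)
                              else 0)"

definition green_plus :: "nat \<Rightarrow> nat \<Rightarrow> nat \<Rightarrow> complex \<Rightarrow> (nat \<Rightarrow> complex) \<Rightarrow> real" where
  "green_plus k \<nu> d \<delta> z =
     lim (\<lambda>n. logplus (supnorm k (((shift_like k \<nu> d \<delta>) ^^ (\<nu> * n)) z)) / real d ^ n)"

definition V_i :: "nat \<Rightarrow> real \<Rightarrow> nat \<Rightarrow> (nat \<Rightarrow> complex) set" where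
  "V_i k R i = {z \<in> cvec k. supnorm k z = cmod (z i) \<and> cmod (z i) \<ge> R}"

definition V_plus :: "nat \<Rightarrow> nat \<Rightarrow> real \<Rightarrow> (nat \<Rightarrow> complex) set" where
  "V_plus k \<nu> R = (\<Union>i\<in>{k - \<nu> + 1..k}. V_i k R i)"

end

theory Submission imports Defs begin

text \<open>On \<open>V\<^sub>R\<^sup>+\<close> with \<open>R\<close> large, \<open>S\<^sup>\<nu>\<close> replaces the dominant coordinate \<open>z\<^sub>i\<close> (\<open>i > k - \<nu>\<close>) by
  roughly \<open>\<delta> z\<^sub>i\<^sup>d\<close> and merely shifts the others, so \<open>V\<^sub>R\<^sup>+\<close> is forward invariant under \<open>S\<^sup>\<nu>\<close>
  and \<open>\<rho>\<^sub>n = \<parallel>S\<^sup>\<nu>\<^sup>n z\<parallel>\<^sub>\<infinity>\<close> satisfies \<open>A \<rho>\<^sub>n\<^sup>d \<le> \<rho>\<^sub>n\<^sub>+\<^sub>1 \<le> B \<rho>\<^sub>n\<^sup>d\<close>. Hence \<open>(log \<rho>\<^sub>n + log A/(d-1))/d\<^sup>n\<close>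
  increases and is bounded, so \<open>G\<^sup>+(z) \<ge> log R + log A/(d-1)\<close>, which exceeds \<open>c\<close> for \<open>R\<close> large.\<close>

lemma norm_le_supnorm: "i \<in> {1..k} \<Longrightarrow> cmod (z i) \<le> supnorm k z"
  unfolding supnorm_def by (rule Max_ge) auto

lemma supnorm_le: "1 \<le> k \<Longrightarrow> (\<And>i. i \<in> {1..k} \<Longrightarrow> cmod (z i) \<le> M) \<Longrightarrow> supnorm k z \<le> M"
  unfolding supnorm_def by (subst Max_le_iff) auto

lemma supnorm_attained: "1 \<le> k \<Longrightarrow> \<exists>i\<in>{1..k}. cmod (z i) = supnorm k z"
proof -
  assume "1 \<le> k"
  then have "supnorm k z \<in> (\<lambda>i. cmod (z i)) ` {1..k}"
    unfolding supnorm_def by (intro Max_in) auto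
  then show ?thesis by auto
qed

lemma V_plus_iff:
  "z \<in> V_plus k \<nu> R \<longleftrightarrow>
     z \<in> cvec k \<and> R \<le> supnorm k z \<and> (\<exists>i\<in>{k - \<nu> + 1..k}. cmod (z i) = supnorm k z)"
proof -
  have "z \<in> V_plus k \<nu> R \<longleftrightarrow>
     (\<exists>i\<in>{k - \<nu> + 1..k}. z \<in> cvec k \<and> supnorm k z = cmod (z i) \<and> R \<le> cmod (z i))"
    by (simp add: V_plus_def V_i_def)
  then show ?thesis
    by (metis (no_types, lifting))
qed

lemma shift_like_funpow:
  assumes "m \<le> \<nu>" "\<nu> < k" "w \<in> cvec k"
  shows "(shift_like k \<nu> d \<delta> ^^ m) w i =
    (if 1 \<le> i \<and> i + m \<le> k then w (i + m)
     else if k < i + m \<and> i \<le> k then \<delta> * (w (i + m - \<nu>) ^ d - w (i + m - k)) else 0)"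
  using assms(1)
proof (induction m arbitrary: i)
  case 0
  then show ?case using assms(3) by (auto simp: cvec_def)
next
  case (Suc m)
  then show ?case
    using assms(2) by (auto simp: shift_like_def algebra_simps Suc_diff_le)
qed

lemma shift_like_funpow_nu:
  assumes "\<nu> < k" "w \<in> cvec k" "i \<in> {1..k}"
  shows "(shift_like k \<nu> d \<delta> ^^ \<nu>) w i =
    (if i + \<nu> \<le> k then w (i + \<nu>) else \<delta> * (w i ^ d - w (i + \<nu> - k)))"
  using shift_like_funpow[OF order_refl assms(1,2)] assms(3) by auto

lemma shift_like_funpow_nu_cvec:
  "\<nu> < k \<Longrightarrow> w \<in> cvec k \<Longrightarrow> (shift_like k \<nu> d \<delta> ^^ \<nu>) w \<in> cvec k"
  using shift_like_funpow[OF order_refl] by (auto simp: cvec_def)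

lemma norm_shift_like_funpow_nu_ge:
  assumes "\<nu> < k" "w \<in> cvec k" "d \<ge> 2" "2 \<le> supnorm k w"
    and i: "i \<in> {k - \<nu> + 1..k}" "cmod (w i) = supnorm k w"
  shows "cmod \<delta> / 2 * supnorm k w ^ d \<le> cmod ((shift_like k \<nu> d \<delta> ^^ \<nu>) w i)"
proof -
  define N where "N = supnorm k w"
  have "N ^ 2 \<le> N ^ d"
    using assms(3,4) by (intro power_increasing) (auto simp: N_def)
  moreover have "2 * N \<le> N ^ 2"
    using assms(4) by (simp add: N_def power2_eq_square mult_right_mono)
  moreover have "cmod (w (i + \<nu> - k)) \<le> N"
    unfolding N_def using i assms(1) by (intro norm_le_supnorm) auto
  moreover have "N ^ d - cmod (w (i + \<nu> - k)) \<le> cmod (w i ^ d - w (i + \<nu> - k))"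
    using norm_triangle_ineq2[of "w i ^ d" "w (i + \<nu> - k)"] i by (simp add: norm_power N_def)
  ultimately have "N ^ d / 2 \<le> cmod (w i ^ d - w (i + \<nu> - k))"
    by linarith
  then have "cmod \<delta> * (N ^ d / 2) \<le> cmod \<delta> * cmod (w i ^ d - w (i + \<nu> - k))"
    by (rule mult_left_mono) simp
  then show ?thesis
    using shift_like_funpow_nu[OF assms(1,2)] i by (auto simp: N_def norm_mult)
qed

lemma supnorm_shift_like_funpow_nu_le:
  assumes "\<nu> < k" "w \<in> cvec k" "d \<ge> 1" "1 \<le> supnorm k w"
  shows "supnorm k ((shift_like k \<nu> d \<delta> ^^ \<nu>) w) \<le> (2 * cmod \<delta> + 1) * supnorm k w ^ d"
proof (rule supnorm_le)
  define N where "N = supnorm k w"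
  have wle: "\<And>j. j \<in> {1..k} \<Longrightarrow> cmod (w j) \<le> N"
    unfolding N_def by (rule norm_le_supnorm)
  have NNd: "N \<le> N ^ d"
    using assms(3,4) by (metis N_def One_nat_def power_increasing power_one_right)
  fix i assume i: "i \<in> {1..k}"
  show "cmod ((shift_like k \<nu> d \<delta> ^^ \<nu>) w i) \<le> (2 * cmod \<delta> + 1) * supnorm k w ^ d"
  proof (cases "i + \<nu> \<le> k")
    case True
    then have "cmod (w (i + \<nu>)) \<le> 1 * N ^ d"
      using wle[of "i + \<nu>"] i NNd by auto
    also have "\<dots> \<le> (2 * cmod \<delta> + 1) * N ^ d"
      using NNd assms(4) N_def by (intro mult_right_mono) auto
    finally show ?thesis
      using True shift_like_funpow_nu[OF assms(1,2) i] by (simp add: N_def)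
  next
    case False
    have "cmod (w i ^ d - w (i + \<nu> - k)) \<le> cmod (w i) ^ d + cmod (w (i + \<nu> - k))"
      using norm_triangle_ineq4 by (metis norm_power)
    also have "\<dots> \<le> N ^ d + N"
      using i False assms(1) by (intro add_mono power_mono wle) auto
    finally have "cmod \<delta> * cmod (w i ^ d - w (i + \<nu> - k)) \<le> cmod \<delta> * (2 * N ^ d)"
      using NNd by (intro mult_left_mono) auto
    also have "\<dots> \<le> (2 * cmod \<delta> + 1) * N ^ d"
      using assms(4) by (simp add: N_def algebra_simps)
    finally show ?thesis
      using False shift_like_funpow_nu[OF assms(1,2) i, of d \<delta>]
      by (simp add: N_def norm_mult)
  qed
qed (use assms(1) in simp)

lemma shift_like_funpow_nu_V_plus:
  assumes "\<nu> < k" "d \<ge> 2" "2 \<le> R" "2 \<le> R * cmod \<delta>" and w: "w \<in> V_plus k \<nu> R"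
  defines "w' \<equiv> (shift_like k \<nu> d \<delta> ^^ \<nu>) w"
  shows "w' \<in> V_plus k \<nu> R \<and> cmod \<delta> / 2 * supnorm k w ^ d \<le> supnorm k w'"
proof -
  define N where "N = supnorm k w"
  obtain i0 where cv: "w \<in> cvec k" and NR: "R \<le> N"
    and i0: "i0 \<in> {k - \<nu> + 1..k}" "cmod (w i0) = N"
    using w by (auto simp: V_plus_iff N_def)
  have low: "cmod \<delta> / 2 * N ^ d \<le> cmod (w' i0)"
    unfolding w'_def N_def using assms(1-3) cv NR i0
    by (intro norm_shift_like_funpow_nu_ge) (auto simp: N_def)
  have "2 \<le> N * cmod \<delta>"
    using assms(4) mult_right_mono[OF NR, of "cmod \<delta>"] by simp
  then have "N * 1 \<le> N * (cmod \<delta> / 2 * N)"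
    using assms(3) NR by (intro mult_left_mono) (auto simp: mult.commute)
  also have "\<dots> = cmod \<delta> / 2 * N ^ 2"
    by (simp add: power2_eq_square)
  also have "\<dots> \<le> cmod \<delta> / 2 * N ^ d"
    using assms(2,3) NR by (intro mult_left_mono power_increasing) auto
  finally have N_le: "N \<le> cmod (w' i0)"
    using low by simp
  have i0_le: "cmod (w' i0) \<le> supnorm k w'"
    using i0 by (intro norm_le_supnorm) auto
  obtain i1 where i1: "i1 \<in> {1..k}" "cmod (w' i1) = supnorm k w'"
    using supnorm_attained[of k w'] assms(1) by auto
  have "\<exists>i\<in>{k - \<nu> + 1..k}. cmod (w' i) = supnorm k w'"
  proof (cases "i1 + \<nu> \<le> k")
    case True
    \<comment> \<open>a shifted coordinate is at most \<open>N\<close>, so the top coordinate \<open>i0\<close> attains the maximum too\<close>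
    then have "cmod (w' i1) \<le> N"
      using i1 shift_like_funpow_nu[OF assms(1) cv i1(1)] norm_le_supnorm[of "i1 + \<nu>" k w]
      by (auto simp: w'_def N_def)
    then show ?thesis
      using i0 i1 N_le i0_le by (intro bexI[of _ i0]) auto
  qed (use i1 in auto)
  then show ?thesis
    using shift_like_funpow_nu_cvec[OF assms(1) cv] NR N_le i0_le low
    by (auto simp: V_plus_iff w'_def N_def)
qed

lemma shift_like_orbit_V_plus:
  assumes "\<nu> < k" "d \<ge> 2" "2 \<le> R" "2 \<le> R * cmod \<delta>" "z \<in> V_plus k \<nu> R"
  shows "(shift_like k \<nu> d \<delta> ^^ (\<nu> * n)) z \<in> V_plus k \<nu> R"
proof (induction n)
  case (Suc n)
  then show ?case
    using shift_like_funpow_nu_V_plus[OF assms(1-4) Suc]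
    by (simp add: funpow_add add.commute)
qed (use assms(5) in simp)

text \<open>The sequences \<open>(L\<^sub>n + a/(D-1))/D\<^sup>n\<close> and \<open>(L\<^sub>n + b/(D-1))/D\<^sup>n\<close> are increasing resp.
  decreasing and differ by \<open>(b-a)/((D-1)D\<^sup>n) \<ge> 0\<close>.\<close>

lemma affine_recurrence_div_power_tendsto:
  fixes L :: "nat \<Rightarrow> real" and D a b :: real
  assumes D: "D > 1" and lower: "\<And>n. a + D * L n \<le> L (Suc n)"
    and upper: "\<And>n. L (Suc n) \<le> b + D * L n"
  shows "\<exists>G. (\<lambda>n. L n / D ^ n) \<longlonglongrightarrow> G \<and> L 0 + a / (D - 1) \<le> G"
proof -
  define \<alpha> \<beta> where "\<alpha> = a / (D - 1)" and "\<beta> = b / (D - 1)"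
  define lo hi where "lo n = (L n + \<alpha>) / D ^ n" and "hi n = (L n + \<beta>) / D ^ n" for n
  have Da: "D * \<alpha> = a + \<alpha>" and Db: "D * \<beta> = b + \<beta>"
    using D by (simp_all add: \<alpha>_def \<beta>_def field_simps)
  have "a \<le> b"
    using lower[of 0] upper[of 0] by simp
  then have "\<alpha> \<le> \<beta>"
    using D by (simp add: \<alpha>_def \<beta>_def divide_right_mono)
  then have lo_hi: "lo n \<le> hi n" for n
    using D by (simp add: lo_def hi_def divide_right_mono)
  have lo_inc: "incseq lo"
  proof (rule incseq_SucI)
    fix n
    have "D * (L n + \<alpha>) \<le> L (Suc n) + \<alpha>"
      using lower[of n] Da by (simp add: algebra_simps)
    then have "D * (L n + \<alpha>) / D ^ Suc n \<le> lo (Suc n)"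
      using D unfolding lo_def by (intro divide_right_mono) auto
    moreover have "D * (L n + \<alpha>) / D ^ Suc n = lo n"
      using D by (simp add: lo_def)
    ultimately show "lo n \<le> lo (Suc n)"
      by simp
  qed
  have hi_dec: "decseq hi"
  proof (rule decseq_SucI)
    fix n
    have "L (Suc n) + \<beta> \<le> D * (L n + \<beta>)"
      using upper[of n] Db by (simp add: algebra_simps)
    then have "hi (Suc n) \<le> D * (L n + \<beta>) / D ^ Suc n"
      using D unfolding hi_def by (intro divide_right_mono) auto
    moreover have "D * (L n + \<beta>) / D ^ Suc n = hi n"
      using D by (simp add: hi_def)
    ultimately show "hi (Suc n) \<le> hi n"
      by simp
  qed
  have "lo n \<le> hi 0" for n
    using lo_hi[of n] decseqD[OF hi_dec, of 0 n] by simp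
  then have bdd: "bdd_above (range lo)"
    by (intro bdd_aboveI2)
  have "(\<lambda>n. lo n - \<alpha> / D ^ n) \<longlonglongrightarrow> (SUP n. lo n) - 0"
    using D lo_inc bdd by (intro tendsto_diff LIMSEQ_incseq_SUP LIMSEQ_divide_realpow_zero)
  moreover have "(\<lambda>n. lo n - \<alpha> / D ^ n) = (\<lambda>n. L n / D ^ n)"
    by (simp add: lo_def diff_divide_distrib add_divide_distrib)
  moreover have "L 0 + a / (D - 1) \<le> (SUP n. lo n)"
    using cSUP_upper[OF _ bdd, of 0] by (simp add: lo_def \<alpha>_def)
  ultimately show ?thesis by auto
qed

lemma green_plus_ge_on_V_plus:
  assumes "\<nu> < k" "d \<ge> 2" "\<delta> \<noteq> 0" "2 \<le> R" "2 \<le> R * cmod \<delta>"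
    and z: "z \<in> V_plus k \<nu> R"
  shows "ln R + ln (cmod \<delta> / 2) / (real d - 1) \<le> green_plus k \<nu> d \<delta> z"
proof -
  define s where "s n = (shift_like k \<nu> d \<delta> ^^ (\<nu> * n)) z" for n
  define \<rho> where "\<rho> n = supnorm k (s n)" for n
  have orbit: "s n \<in> V_plus k \<nu> R" for n
    unfolding s_def using assms(1,2,4,5) z by (rule shift_like_orbit_V_plus)
  have s_Suc: "s (Suc n) = (shift_like k \<nu> d \<delta> ^^ \<nu>) (s n)" for n
    by (simp add: s_def funpow_add)
  have \<rho>R: "R \<le> \<rho> n" for n
    using orbit[of n] by (simp add: \<rho>_def V_plus_iff)
  have \<rho>_pos: "0 < \<rho> n" for n
    using \<rho>R[of n] assms(4) by linarith
  have ln_mult_power: "ln A + real d * ln (\<rho> n) = ln (A * \<rho> n ^ d)" if "A > 0" for A n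
    using that \<rho>_pos[of n] by (simp add: ln_mult ln_realpow)
  have "cmod \<delta> / 2 * \<rho> n ^ d \<le> \<rho> (Suc n)" for n
    using shift_like_funpow_nu_V_plus[OF assms(1,2,4,5) orbit[of n]]
    by (simp add: \<rho>_def s_Suc)
  moreover have "\<rho> (Suc n) \<le> (2 * cmod \<delta> + 1) * \<rho> n ^ d" for n
    using supnorm_shift_like_funpow_nu_le[OF assms(1)] orbit[of n] \<rho>R[of n] assms(2,4)
    by (simp add: \<rho>_def s_Suc V_plus_iff)
  ultimately have "ln (cmod \<delta> / 2) + real d * ln (\<rho> n) \<le> ln (\<rho> (Suc n))"
    and "ln (\<rho> (Suc n)) \<le> ln (2 * cmod \<delta> + 1) + real d * ln (\<rho> n)" for n
    using \<rho>_pos assms(3) by (simp_all add: ln_mult_power add_pos_nonneg)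
  from affine_recurrence_div_power_tendsto[where L = "\<lambda>n. ln (\<rho> n)", OF _ this]
  obtain G where G: "(\<lambda>n. ln (\<rho> n) / real d ^ n) \<longlonglongrightarrow> G"
    "ln (\<rho> 0) + ln (cmod \<delta> / 2) / (real d - 1) \<le> G"
    using assms(2) by auto
  have "logplus (\<rho> n) = ln (\<rho> n)" for n
    using \<rho>R[of n] assms(4) by (simp add: logplus_def)
  then have "green_plus k \<nu> d \<delta> z = lim (\<lambda>n. ln (\<rho> n) / real d ^ n)"
    by (simp add: green_plus_def \<rho>_def s_def)
  moreover have "ln R \<le> ln (\<rho> 0)"
    using \<rho>R[of 0] assms(4) by simp
  ultimately show ?thesis
    using G by (simp add: limI)
qed

theorem proposition4p3:
  fixes k \<nu> d :: nat and \<delta> :: complex and c :: real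
  assumes "k \<ge> 2" and "1 \<le> \<nu>" and "\<nu> \<le> k - 1" and "d \<ge> 2" and "\<delta> \<noteq> 0"
    and "c > 0"
  shows "\<exists>R>0. \<forall>z\<in>V_plus k \<nu> R. green_plus k \<nu> d \<delta> z \<ge> c"
proof -
  define \<alpha> where "\<alpha> = ln (cmod \<delta> / 2) / (real d - 1)"
  define R where "R = max (max 2 (2 / cmod \<delta>)) (exp (c - \<alpha>))"
  have "2 \<le> R" and "2 / cmod \<delta> \<le> R" and "exp (c - \<alpha>) \<le> R"
    by (simp_all add: R_def)
  moreover have "0 < cmod \<delta>"
    using assms(5) by simp
  ultimately have "2 \<le> R * cmod \<delta>" and "c \<le> ln R + \<alpha>"
    using ln_ge_iff[of R "c - \<alpha>"] by (simp_all add: field_simps)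
  then have "\<forall>z\<in>V_plus k \<nu> R. c \<le> green_plus k \<nu> d \<delta> z"
    using green_plus_ge_on_V_plus[of \<nu> k d \<delta> R] assms \<open>2 \<le> R\<close>
    by (fastforce simp: \<alpha>_def)
  with \<open>2 \<le> R\<close> show ?thesis
    by (intro exI[of _ R]) auto
qed

end
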